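(* Fix $\theta,\varphi\in\mathbb{R}$ and $v\in(0,1)$, and for $\varphi_1,\varphi_3\in\mathbb{R}$, $v_2\in[0,1)$ let $$g(\varphi_1,v_2,\varphi_3)=vv_2e^{i(\varphi-\varphi_1+\theta)}+vv_2e^{i(\theta-\varphi+\varphi_3)}+v^2e^{i(\varphi_3-\theta-\varphi_1)}.$$ Then for every $v_2$ with $v\le v_2<1$, the set $\{g(\varphi_1,v_2,\varphi_3):\varphi_1,\varphi_3\in\mathbb{R}\}\subset\mathbb{C}$ is simply connected (it has no holes). *)

theory Defs
  imports "HOL-Analysis.Analysis"
begin

definition gfun :: "real \<Rightarrow> real \<Rightarrow> real \<Rightarrow> real \<Rightarrow> real \<Rightarrow> real \<Rightarrow> complex" where
  "gfun \<theta> \<phi> v \<phi>1 v2 \<phi>3 =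
     complex_of_real (v * v2) * cis (\<phi> - \<phi>1 + \<theta>)
   + complex_of_real (v * v2) * cis (\<theta> - \<phi> + \<phi>3)
   + complex_of_real (v^2) * cis (\<phi>3 - \<theta> - \<phi>1)"

end

theory Submission
  imports Defs
begin

text \<open>
  Put \<open>\<zeta> = cis m\<close>, where \<open>m\<close> and \<open>d\<close> are the mean and half-difference of the phases of the first two terms.
  Then \<open>g = \<zeta> * (c * \<zeta> + t)\<close> with \<open>c = v\<^sup>2 cis (-3\<theta>)\<close> and \<open>t = 2 v v\<^sub>2 cos d\<close>, so the image is
  the set of all \<open>\<zeta> (c \<zeta> + t)\<close> with \<open>\<bar>\<zeta>\<bar> = 1\<close> and \<open>\<bar>t\<bar> \<le> 2r\<close>, \<open>r = v v\<^sub>2 \<ge> \<bar>c\<bar>\<close>.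
  For \<open>W = c \<zeta> + t\<close> one has \<open>\<bar>z\<bar>\<^sup>2 + c z = W (t + 2 Re (c \<zeta>))\<close> and \<open>\<bar>W\<bar>\<^sup>2 - \<bar>c\<bar>\<^sup>2 = t (t + 2 Re (c \<zeta>))\<close>;
  eliminating \<open>\<zeta>\<close> and \<open>t\<close> describes the image by the single inequality
  \<open>\<bar>z\<bar> (\<bar>z\<bar>\<^sup>2 - \<bar>c\<bar>\<^sup>2) \<le> 2 r \<bar>\<bar>z\<bar>\<^sup>2 + c z\<bar>\<close>.
  Writing \<open>c z = \<bar>c\<bar> \<bar>z\<bar> w\<close> with \<open>\<bar>w\<bar> = 1\<close>, a point \<open>l z\<close> (\<open>l \<ge> 0\<close>, \<open>\<rho> = l \<bar>z\<bar>\<close>) satisfies it iff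
  \<open>\<rho> \<le> \<bar>c\<bar>\<close> or \<open>(\<rho>\<^sup>2 - \<bar>c\<bar>\<^sup>2) / \<bar>\<rho> + \<bar>c\<bar> w\<bar> \<le> 2r\<close>, and this quotient is nondecreasing in
  \<open>\<rho> \<ge> \<bar>c\<bar>\<close>. So the image is star-shaped about \<open>0\<close>, hence simply connected.
\<close>

lemma gfun_eq_cis_mult:
  assumes "\<phi> - \<phi>1 + \<theta> = m + d" "\<theta> - \<phi> + \<phi>3 = m - d"
  shows "gfun \<theta> \<phi> v \<phi>1 v2 \<phi>3
           = cis m * ((of_real (v^2) * cis (-3 * \<theta>)) * cis m + of_real (2 * (v * v2) * cos d))"
proof -
  have cos2: "(of_real (2 * cos d) :: complex) = cis d + cis (-d)" by (simp add: complex_eq_iff)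
  have plus: "cis m * cis d = cis (\<phi> - \<phi>1 + \<theta>)" using assms by (simp add: cis_mult)
  have minus: "cis m * cis (-d) = cis (\<theta> - \<phi> + \<phi>3)" using assms by (simp add: cis_mult)
  have "cis (-3 * \<theta>) * cis m * cis m = cis (-3 * \<theta> + m + m)" by (simp add: cis_mult)
  also have "-3 * \<theta> + m + m = \<phi>3 - \<theta> - \<phi>1" using assms by linarith
  finally have square: "cis (-3 * \<theta>) * cis m * cis m = cis (\<phi>3 - \<theta> - \<phi>1)" .
  have "cis m * ((of_real (v^2) * cis (-3 * \<theta>)) * cis m + of_real (2 * (v * v2) * cos d))
     = of_real (v^2) * (cis (-3 * \<theta>) * cis m * cis m) + of_real (v * v2) * (cis m * of_real (2 * cos d))"
    by (simp add: algebra_simps)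
  also have "cis m * of_real (2 * cos d) = cis (\<phi> - \<phi>1 + \<theta>) + cis (\<theta> - \<phi> + \<phi>3)"
    unfolding cos2 using plus minus by (simp add: distrib_left)
  finally show ?thesis unfolding gfun_def square by (simp add: algebra_simps)
qed

definition circle_image :: "complex \<Rightarrow> real \<Rightarrow> complex set" where
  "circle_image c r = {\<zeta> * (c * \<zeta> + of_real t) | \<zeta> t. cmod \<zeta> = 1 \<and> \<bar>t\<bar> \<le> 2 * r}"

lemma image_gfun_eq_circle_image:
  assumes "0 \<le> v * v2"
  shows "{gfun \<theta> \<phi> v \<phi>1 v2 \<phi>3 | \<phi>1 \<phi>3. True}
           = circle_image (of_real (v^2) * cis (-3 * \<theta>)) (v * v2)"
    (is "?S = circle_image ?c ?r")
proof (intro equalityI subsetI)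
  fix z assume "z \<in> ?S"
  then obtain \<phi>1 \<phi>3 where z: "z = gfun \<theta> \<phi> v \<phi>1 v2 \<phi>3" by blast
  define m where "m = ((\<phi> - \<phi>1 + \<theta>) + (\<theta> - \<phi> + \<phi>3)) / 2"
  define d where "d = ((\<phi> - \<phi>1 + \<theta>) - (\<theta> - \<phi> + \<phi>3)) / 2"
  have "z = cis m * (?c * cis m + of_real (2 * ?r * cos d))"
    unfolding z by (rule gfun_eq_cis_mult) (simp_all add: m_def d_def field_simps)
  moreover have "\<bar>2 * r * cos d\<bar> \<le> 2 * r" if "0 \<le> r" for r :: real
    using that abs_cos_le_one[of d] by (simp add: abs_mult mult_left_le)
  ultimately show "z \<in> circle_image ?c ?r" using assms unfolding circle_image_def by force
next
  fix z assume "z \<in> circle_image ?c ?r"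
  then obtain \<zeta> t where unit: "cmod \<zeta> = 1" and t: "\<bar>t\<bar> \<le> 2 * ?r"
    and z: "z = \<zeta> * (?c * \<zeta> + of_real t)"
    unfolding circle_image_def by blast
  define m where "m = Arg \<zeta>"
  define d where "d = arccos (t / (2 * ?r))"
  have "\<zeta> \<noteq> 0" using unit by auto
  then have zeta: "\<zeta> = cis m"
    using unit by (simp add: m_def cis_Arg sgn_div_norm)
  have t_eq: "t = 2 * ?r * cos d"
  proof (cases "?r = 0")
    case False
    then have "\<bar>t / (2 * ?r)\<bar> \<le> 1" using assms t by (simp add: abs_divide divide_le_eq)
    then show ?thesis using False by (simp add: d_def cos_arccos_abs)
  qed (use t in auto)
  have "z = gfun \<theta> \<phi> v (\<phi> + \<theta> - (m + d)) v2 ((m - d) - \<theta> + \<phi>)"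
    unfolding z zeta t_eq by (intro gfun_eq_cis_mult[symmetric]) simp_all
  then show "z \<in> ?S" by blast
qed

definition circle_region :: "complex \<Rightarrow> real \<Rightarrow> complex set" where
  "circle_region c r =
     {z. cmod z * ((cmod z)^2 - (cmod c)^2) \<le> 2 * r * cmod (of_real ((cmod z)^2) + c * z)}"

lemma circle_image_subset_region: "circle_image c r \<subseteq> circle_region c r"
proof
  fix z assume "z \<in> circle_image c r"
  then obtain \<zeta> t where unit: "cmod \<zeta> = 1" and t: "\<bar>t\<bar> \<le> 2 * r"
    and z: "z = \<zeta> * (c * \<zeta> + of_real t)"
    unfolding circle_image_def by blast
  define W where "W = c * \<zeta> + of_real t"
  define R where "R = t + 2 * Re (c * \<zeta>)"
  have norm_z: "cmod z = cmod W" using unit by (simp add: z W_def norm_mult)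
  have norm_c: "cmod c = cmod (c * \<zeta>)" using unit by (simp add: norm_mult)
  have "of_real ((cmod W)^2) + c * z = W * cnj W + W * (c * \<zeta>)"
    unfolding complex_norm_square by (simp add: z W_def mult_ac)
  also have "\<dots> = W * of_real R"
    by (simp only: distrib_left[symmetric]) (simp add: W_def R_def complex_eq_iff)
  finally have sum_eq: "of_real ((cmod W)^2) + c * z = W * of_real R" .
  have diff_eq: "(cmod W)^2 - (cmod (c * \<zeta>))^2 = t * R"
    using cmod_power2[of W] cmod_power2[of "c * \<zeta>"]
    by (simp add: W_def R_def power2_eq_square algebra_simps)
  have "cmod z * ((cmod z)^2 - (cmod c)^2) = cmod W * (t * R)"
    unfolding norm_z norm_c diff_eq ..
  also have "\<dots> \<le> cmod W * (\<bar>t\<bar> * \<bar>R\<bar>)"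
    by (intro mult_left_mono) (auto simp: abs_mult[symmetric])
  also have "\<dots> \<le> cmod W * (2 * r * \<bar>R\<bar>)"
    using t by (intro mult_left_mono mult_right_mono) auto
  also have "\<dots> = 2 * r * cmod (of_real ((cmod z)^2) + c * z)"
    unfolding norm_z sum_eq by (simp add: norm_mult)
  finally show "z \<in> circle_region c r" unfolding circle_region_def by simp
qed

lemma unit_factorisation:
  fixes c z :: complex
  defines "P \<equiv> of_real ((cmod z)^2) + c * z"
  assumes "z \<noteq> 0" "P \<noteq> 0"
  shows "\<exists>\<zeta>. cmod \<zeta> = 1
           \<and> z = \<zeta> * (c * \<zeta> + of_real (cmod z * ((cmod z)^2 - (cmod c)^2) / cmod P))"
proof -
  define \<rho> where "\<rho> = cmod z"
  define s where "s = cmod c"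
  define t where "t = \<rho> * (\<rho>^2 - s^2) / cmod P"
  \<comment> \<open>\<open>W = c \<zeta> + t\<close> has modulus \<open>\<bar>z\<bar>\<close> and is a positive real multiple of \<open>P\<close>.\<close>
  define W where "W = of_real \<rho> * P / of_real (cmod P)"
  have norm_W: "cmod W = \<rho>" using assms by (simp add: W_def norm_mult norm_divide \<rho>_def)
  have "W \<noteq> 0" using assms norm_W by (auto simp: \<rho>_def)
  have W_minus_t: "W - of_real t = of_real \<rho> * (c * z + of_real (s^2)) / of_real (cmod P)"
    using assms by (simp add: W_def t_def P_def \<rho>_def field_simps)
  have "cnj P = of_real (\<rho>^2) + cnj c * cnj z" by (simp add: P_def \<rho>_def)
  then have "c * z * cnj P = of_real (\<rho>^2) * c * z + (c * cnj c) * (z * cnj z)"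
    by (simp add: algebra_simps)
  also have "\<dots> = of_real (\<rho>^2) * (c * z + of_real (s^2))"
    by (simp add: \<rho>_def s_def complex_norm_square[symmetric] algebra_simps)
  finally have conj: "of_real (\<rho>^2) * (c * z + of_real (s^2)) = c * z * cnj P" ..
  have "W * (W - of_real t) = P * (of_real (\<rho>^2) * (c * z + of_real (s^2))) / of_real ((cmod P)^2)"
    unfolding W_minus_t by (simp add: W_def power2_eq_square)
  also have "\<dots> = P * (c * z * cnj P) / (P * cnj P)"
    by (simp only: conj complex_norm_square)
  also have "\<dots> = c * z"
    using \<open>P \<noteq> 0\<close> by simp
  finally have square: "c * z + of_real t * W = W * W" by (simp add: algebra_simps)
  have "z / W * (c * (z / W) + of_real t) = z * (c * z + of_real t * W) / (W * W)"
    using \<open>W \<noteq> 0\<close> by (simp add: field_simps)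
  also have "\<dots> = z" using \<open>W \<noteq> 0\<close> \<open>z \<noteq> 0\<close> by (simp add: square)
  finally have "z / W * (c * (z / W) + of_real t) = z" .
  moreover have "cmod (z / W) = 1" using \<open>z \<noteq> 0\<close> by (simp add: norm_divide norm_W \<rho>_def)
  ultimately show ?thesis unfolding t_def \<rho>_def s_def by metis
qed

lemma abs_param_le_of_mem_circle_region:
  fixes c z :: complex
  defines "P \<equiv> of_real ((cmod z)^2) + c * z"
  assumes "z \<in> circle_region c r" "cmod c \<le> r" "P \<noteq> 0"
  shows "\<bar>cmod z * ((cmod z)^2 - (cmod c)^2) / cmod P\<bar> \<le> 2 * r"
proof (cases "cmod c \<le> cmod z")
  case True
  then have "0 \<le> cmod z * ((cmod z)^2 - (cmod c)^2)" by (simp add: power_mono)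
  then show ?thesis
    using assms by (simp add: circle_region_def divide_le_eq mult_ac)
next
  case False
  have "cmod (c * z) - cmod (of_real ((cmod z)^2) :: complex) \<le> cmod P"
    unfolding P_def by (metis add.commute norm_diff_ineq)
  then have lower: "cmod z * (cmod c - cmod z) \<le> cmod P"
    by (simp add: norm_mult power2_eq_square algebra_simps)
  have lt: "(cmod z)^2 < (cmod c)^2" using False by (simp add: power_strict_mono)
  then have neg: "(cmod z)^2 - (cmod c)^2 < 0" by simp
  have "\<bar>cmod z * ((cmod z)^2 - (cmod c)^2) / cmod P\<bar> = cmod z * ((cmod c)^2 - (cmod z)^2) / cmod P"
    by (simp add: abs_divide abs_mult abs_of_neg[OF neg])
  also have "\<dots> \<le> cmod z * ((cmod c)^2 - (cmod z)^2) / (cmod z * (cmod c - cmod z))"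
    using assms False lower lt by (intro divide_left_mono mult_pos_pos) auto
  also have "\<dots> \<le> cmod c + cmod z"
    using False by (cases "z = 0") (simp_all add: power2_eq_square field_simps)
  also have "\<dots> \<le> 2 * r" using False assms by simp
  finally show ?thesis .
qed

lemma zero_mem_circle_image:
  assumes "cmod c \<le> r"
  shows "0 \<in> circle_image c r"
proof -
  define \<zeta> where "\<zeta> = (if c = 0 then 1 else cnj c / of_real (cmod c))"
  have "cmod \<zeta> = 1" by (simp add: \<zeta>_def norm_divide)
  moreover have "c * \<zeta> = of_real (cmod c)"
  proof (cases "c = 0")
    case False
    then have "c * \<zeta> = of_real ((cmod c)^2) / of_real (cmod c)"
      by (simp only: \<zeta>_def if_False times_divide_eq_right complex_norm_square)
    then show ?thesis using False by (simp add: power2_eq_square)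
  qed (simp add: \<zeta>_def)
  moreover have "cmod c \<le> 2 * r" using assms norm_ge_zero[of c] by linarith
  then have "\<bar>- cmod c\<bar> \<le> 2 * r" by simp
  ultimately show ?thesis
    unfolding circle_image_def by (force intro!: exI[of _ \<zeta>] exI[of _ "- cmod c"])
qed

lemma circle_region_subset_image:
  assumes "cmod c \<le> r"
  shows "circle_region c r \<subseteq> circle_image c r"
proof
  fix z assume z: "z \<in> circle_region c r"
  have "\<exists>\<zeta> t. cmod \<zeta> = 1 \<and> \<bar>t\<bar> \<le> 2 * r \<and> z = \<zeta> * (c * \<zeta> + of_real t)"
  proof (cases "z = 0")
    case True
    then show ?thesis using zero_mem_circle_image[OF assms] unfolding circle_image_def by blast
  next
    case False
    show ?thesis
    proof (cases "of_real ((cmod z)^2) + c * z = 0")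
      case True
      then have cz: "c * z = - of_real ((cmod z)^2)" by (simp add: add_eq_0_iff)
      then have "cmod c * cmod z = (cmod z)^2" by (metis norm_minus_cancel norm_mult norm_of_real abs_power2 real_norm_def)
      then have norm_eq: "cmod c = cmod z" using False by (simp add: power2_eq_square)
      have "c \<noteq> 0" using cz False by auto
      define \<zeta> where "\<zeta> = csqrt (z / c)"
      have "\<zeta> * (c * \<zeta> + of_real 0) = c * \<zeta>^2" by (simp add: power2_eq_square)
      also have "\<dots> = z" using \<open>c \<noteq> 0\<close> by (simp add: \<zeta>_def)
      finally have "z = \<zeta> * (c * \<zeta> + of_real 0)" ..
      moreover have "cmod \<zeta> = 1" using False norm_eq by (simp add: \<zeta>_def norm_divide)
      moreover have "\<bar>0\<bar> \<le> 2 * r" using order_trans[OF norm_ge_zero assms] by simp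
      ultimately show ?thesis by blast
    next
      case False
      then show ?thesis
        using unit_factorisation[OF \<open>z \<noteq> 0\<close> False] abs_param_le_of_mem_circle_region[OF z assms False]
        by blast
    qed
  qed
  then show "z \<in> circle_image c r" unfolding circle_image_def by blast
qed

lemma circle_image_eq_region:
  assumes "cmod c \<le> r"
  shows "circle_image c r = circle_region c r"
  using circle_image_subset_region circle_region_subset_image[OF assms] by (rule subset_antisym)

lemma diff_squares_norm_sq_mono:
  fixes s m1 m2 x :: real
  assumes "0 \<le> s" "s \<le> m1" "m1 \<le> m2" "-1 \<le> x" "x \<le> 1"
  shows "(m1^2 - s^2)^2 * (m2^2 + 2 * m2 * s * x + s^2) \<le> (m2^2 - s^2)^2 * (m1^2 + 2 * m1 * s * x + s^2)"
proof -
  define E1 where "E1 = (m1 + s)^2 * (m2 + s)^2 * ((m2 - s)^2 - (m1 - s)^2)"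
  define E2 where "E2 = (m1 - s)^2 * (m2 - s)^2 * ((m2 + s)^2 - (m1 + s)^2)"
  have "E1 \<ge> 0" "E2 \<ge> 0" unfolding E1_def E2_def using assms
    by (auto intro!: mult_nonneg_nonneg power_mono simp: diff_ge_0_iff_ge)
  then have "0 \<le> (1 + x) * E1 + (1 - x) * E2" using assms by simp
  also have "(1 + x) * E1 + (1 - x) * E2
      = 2 * ((m2^2 - s^2)^2 * (m1^2 + 2 * m1 * s * x + s^2) - (m1^2 - s^2)^2 * (m2^2 + 2 * m2 * s * x + s^2))"
    unfolding E1_def E2_def by algebra
  finally show ?thesis by simp
qed

text \<open>Equivalently, \<open>(m\<^sup>2 - s\<^sup>2) / \<bar>m + s w\<bar>\<close> is nondecreasing in \<open>m \<ge> s\<close>.\<close>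
lemma diff_squares_mult_norm_mono:
  fixes w :: complex and s m1 m2 :: real
  assumes "cmod w = 1" "0 \<le> s" "s \<le> m1" "m1 \<le> m2"
  shows "(m1^2 - s^2) * cmod (of_real m2 + of_real s * w) \<le> (m2^2 - s^2) * cmod (of_real m1 + of_real s * w)"
proof (rule power2_le_imp_le)
  have norm_sq: "(cmod (of_real m + of_real s * w))^2 = m^2 + 2 * m * s * Re w + s^2" for m
  proof -
    have "(Re w)^2 + (Im w)^2 = 1" using assms(1) by (simp add: cmod_def)
    then have "s * s * (Im w * Im w + Re w * Re w) = s * s" by (simp add: power2_eq_square add.commute)
    then show ?thesis
      using cmod_power2[of "of_real m + of_real s * w"] by (simp add: power2_eq_square algebra_simps)
  qed
  have "-1 \<le> Re w" "Re w \<le> 1" using abs_Re_le_cmod[of w] assms(1) by auto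
  then show "((m1^2 - s^2) * cmod (of_real m2 + of_real s * w))^2
      \<le> ((m2^2 - s^2) * cmod (of_real m1 + of_real s * w))^2"
    unfolding power_mult_distrib norm_sq using diff_squares_norm_sq_mono assms(2-4) by blast
  have "s^2 \<le> m2^2" using assms by (intro power_mono) auto
  then show "0 \<le> (m2^2 - s^2) * cmod (of_real m1 + of_real s * w)" by simp
qed

lemma scaled_mem_circle_region_iff:
  assumes "c * z = of_real (cmod c * cmod z) * w" "0 \<le> l"
  shows "of_real l * z \<in> circle_region c r \<longleftrightarrow>
           l * cmod z * ((l * cmod z)^2 - (cmod c)^2)
             \<le> 2 * r * (l * cmod z * cmod (of_real (l * cmod z) + of_real (cmod c) * w))"
proof -
  have norm_lz: "cmod (of_real l * z) = l * cmod z" using assms(2) by (simp add: norm_mult)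
  have "c * (of_real l * z) = of_real l * (c * z)" by (simp add: mult.left_commute)
  then have "of_real ((cmod (of_real l * z))^2) + c * (of_real l * z)
      = of_real (l * cmod z) * (of_real (l * cmod z) + of_real (cmod c) * w)"
    unfolding norm_lz assms(1) by (simp add: power2_eq_square algebra_simps)
  moreover have "0 \<le> l * cmod z" using assms(2) by simp
  ultimately show ?thesis
    unfolding circle_region_def mem_Collect_eq norm_lz by (simp only: norm_mult norm_of_real abs_of_nonneg)
qed

lemma circle_region_scale:
  assumes z: "z \<in> circle_region c r" and "0 \<le> l" "l \<le> 1" "0 \<le> r"
  shows "of_real l * z \<in> circle_region c r"
proof -
  define \<rho> where "\<rho> = cmod z"
  define s where "s = cmod c"
  define w where "w = (if c * z = 0 then 1 else sgn (c * z))"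
  have unit: "cmod w = 1" by (simp add: w_def norm_sgn)
  have polar: "c * z = of_real (s * \<rho>) * w"
    by (simp add: w_def s_def \<rho>_def sgn_eq norm_mult[symmetric])
  show ?thesis
  proof (cases "l * \<rho> \<le> s")
    case True
    have "(l * \<rho>)^2 \<le> s^2" using True assms by (intro power_mono) (auto simp: \<rho>_def)
    then have "l * \<rho> * ((l * \<rho>)^2 - s^2) \<le> 0"
      using assms by (intro mult_nonneg_nonpos) (auto simp: \<rho>_def)
    also have "0 \<le> 2 * r * (l * \<rho> * cmod (of_real (l * \<rho>) + of_real s * w))"
      using assms by (simp add: \<rho>_def)
    finally show ?thesis
      using scaled_mem_circle_region_iff[OF polar[unfolded s_def \<rho>_def] \<open>0 \<le> l\<close>]
      by (simp add: s_def \<rho>_def)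
  next
    case False
    then have "s < l * \<rho>" by simp
    moreover have "0 \<le> s" by (simp add: s_def)
    ultimately have "0 < l * \<rho>" by linarith
    moreover have "0 \<le> \<rho>" by (simp add: \<rho>_def)
    ultimately have "0 < l" "0 < \<rho>"
      using \<open>0 \<le> l\<close> by (auto simp: zero_less_mult_iff)
    have "l * \<rho> \<le> \<rho>" using \<open>l \<le> 1\<close> \<open>0 < \<rho>\<close> by simp
    have "0 < \<rho> - s" using \<open>s < l * \<rho>\<close> \<open>l * \<rho> \<le> \<rho>\<close> by linarith
    also have "\<dots> \<le> cmod (of_real \<rho> + of_real s * w)"
      using norm_diff_ineq[of "of_real \<rho>" "of_real s * w"] \<open>0 < \<rho>\<close> unit
      by (simp add: norm_mult s_def)
    finally have pos: "0 < cmod (of_real \<rho> + of_real s * w)" .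
    have "\<rho> * (\<rho>^2 - s^2) \<le> 2 * r * (\<rho> * cmod (of_real \<rho> + of_real s * w))"
      using scaled_mem_circle_region_iff[OF polar[unfolded s_def \<rho>_def], of 1 r] z
      by (simp add: s_def \<rho>_def)
    then have bound: "\<rho>^2 - s^2 \<le> 2 * r * cmod (of_real \<rho> + of_real s * w)"
      using \<open>0 < \<rho>\<close> by (simp add: mult.left_commute[of \<rho>])
    have "((l * \<rho>)^2 - s^2) * cmod (of_real \<rho> + of_real s * w)
        \<le> (\<rho>^2 - s^2) * cmod (of_real (l * \<rho>) + of_real s * w)"
      using diff_squares_mult_norm_mono[OF unit _ _ \<open>l * \<rho> \<le> \<rho>\<close>] \<open>s < l * \<rho>\<close>
      by (simp add: s_def)
    also have "\<dots> \<le> 2 * r * cmod (of_real \<rho> + of_real s * w) * cmod (of_real (l * \<rho>) + of_real s * w)"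
      using bound by (intro mult_right_mono) auto
    finally have "(l * \<rho>)^2 - s^2 \<le> 2 * r * cmod (of_real (l * \<rho>) + of_real s * w)"
      using pos by (simp add: mult.commute[of _ "cmod (of_real \<rho> + of_real s * w)"] mult.assoc)
    then have "l * \<rho> * ((l * \<rho>)^2 - s^2) \<le> l * \<rho> * (2 * r * cmod (of_real (l * \<rho>) + of_real s * w))"
      using \<open>0 < l\<close> \<open>0 < \<rho>\<close> by (intro mult_left_mono) auto
    then show ?thesis
      using scaled_mem_circle_region_iff[OF polar[unfolded s_def \<rho>_def] \<open>0 \<le> l\<close>]
      by (simp add: s_def \<rho>_def mult_ac)
  qed
qed

lemma starlike_circle_region:
  assumes "0 \<le> r"
  shows "starlike (circle_region c r)"
  unfolding starlike_def
proof (intro bexI ballI subsetI)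
  show "0 \<in> circle_region c r" by (simp add: circle_region_def)
  fix z y assume "z \<in> circle_region c r" "y \<in> closed_segment 0 z"
  then obtain l where "0 \<le> l" "l \<le> 1" "y = of_real l * z"
    by (auto simp: closed_segment_def scaleR_conv_of_real)
  then show "y \<in> circle_region c r"
    using circle_region_scale[OF \<open>z \<in> circle_region c r\<close> _ _ assms] by simp
qed

theorem mainTheorem9:
  fixes \<theta> \<phi> v v2 :: real
  assumes "0 < v" and "v < 1"
    and "v \<le> v2" and "v2 < 1"
  shows "path_connected {gfun \<theta> \<phi> v \<phi>1 v2 \<phi>3 | \<phi>1 \<phi>3. True}
       \<and> simply_connected {gfun \<theta> \<phi> v \<phi>1 v2 \<phi>3 | \<phi>1 \<phi>3. True}"
proof -
  define c where "c = of_real (v^2) * cis (-3 * \<theta>)"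
  have "cmod c = v^2" by (simp add: c_def norm_mult norm_power)
  also have "\<dots> \<le> v * v2" using assms by (simp add: power2_eq_square)
  finally have "cmod c \<le> v * v2" .
  have "{gfun \<theta> \<phi> v \<phi>1 v2 \<phi>3 | \<phi>1 \<phi>3. True} = circle_image c (v * v2)"
    unfolding c_def using assms by (intro image_gfun_eq_circle_image) simp
  also have "\<dots> = circle_region c (v * v2)"
    using \<open>cmod c \<le> v * v2\<close> by (rule circle_image_eq_region)
  finally have image_eq: "{gfun \<theta> \<phi> v \<phi>1 v2 \<phi>3 | \<phi>1 \<phi>3. True} = circle_region c (v * v2)" .
  have "starlike (circle_region c (v * v2))"
    using assms by (intro starlike_circle_region) simp
  then show ?thesis
    unfolding image_eq by (simp add: starlike_imp_path_connected starlike_imp_simply_connected)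
qed

end
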